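(* Let $m$ be an even positive integer. Then $$\bigcup_{\gamma\in M_1^m}\Gamma_0(2)^+\gamma=\bigcup_{\gamma\in M_2^m}\Gamma_0(2)^+\gamma w_2.$$
   Context: Matrices are in $GL_2^+(\mathbb{R})$ considered up to sign; $\Gamma_0(2)=\{\begin{bmatrix}a&b\\c&d\end{bmatrix}\in SL_2(\mathbb{Z}): c\equiv0\pmod 2\}$, $w_2=2^{-1/2}\begin{bmatrix}0&-1\\2&0\end{bmatrix}$, $\Gamma_0(2)^+$ is the group generated by $\Gamma_0(2)$ and $w_2$. With integers $x,z>0$, $y$: $M_1^m=\{\begin{bmatrix}x&y\\0&z\end{bmatrix}: xz=m,\ 0\leq y<z,\ \gcd(x,y,z)=1,\ x\text{ odd}\}$, $S_1^m=\{\begin{bmatrix}x&y\\0&z\end{bmatrix}: xz=m,\ 0\leq y<z,\ \gcd(x,y,z)=1,\ z\text{ odd}\}$, $S_2^m=\{2^{-1/2}\begin{bmatrix}x&y\\0&z\end{bmatrix}: xz=2m,\ 0\leq y<z,\ \gcd(x,y,z)=1,\ x,z\text{ even}\}$, $M_2^m=S_1^m\cup S_2^m$. *)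

theory Defs
  imports "HOL-Analysis.Analysis"
begin

text \<open>Since -I lies in Gamma0(2), every right coset of Gamma0(2)^+
  is closed under sign, so comparing sets of matrices is the same as comparing them up to sign.\<close>

definition mat2 :: "real \<Rightarrow> real \<Rightarrow> real \<Rightarrow> real \<Rightarrow> real^2^2" where
  "mat2 a b c d = vector [vector [a, b], vector [c, d]]"

definition Gamma0_2 :: "(real^2^2) set" where
  "Gamma0_2 = {mat2 (of_int a) (of_int b) (of_int c) (of_int d) | a b c d :: int.
                 a * d - b * c = 1 \<and> even c}"

definition w2 :: "real^2^2" where
  "w2 = (1 / sqrt 2) *\<^sub>R mat2 0 (-1) 2 0"

inductive_set Gamma0_2_plus :: "(real^2^2) set" where
  gen_G: "A \<in> Gamma0_2 \<Longrightarrow> A \<in> Gamma0_2_plus"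
| gen_w: "w2 \<in> Gamma0_2_plus"
| mult: "A \<in> Gamma0_2_plus \<Longrightarrow> B \<in> Gamma0_2_plus \<Longrightarrow> A ** B \<in> Gamma0_2_plus"
| inv: "A \<in> Gamma0_2_plus \<Longrightarrow> matrix_inv A \<in> Gamma0_2_plus"

definition M1 :: "int \<Rightarrow> (real^2^2) set" where
  "M1 m = {mat2 (of_int x) (of_int y) 0 (of_int z) | x y z :: int.
             x > 0 \<and> z > 0 \<and> x * z = m \<and> 0 \<le> y \<and> y < z \<and> gcd x (gcd y z) = 1 \<and> odd x}"

definition S1 :: "int \<Rightarrow> (real^2^2) set" where
  "S1 m = {mat2 (of_int x) (of_int y) 0 (of_int z) | x y z :: int.
             x > 0 \<and> z > 0 \<and> x * z = m \<and> 0 \<le> y \<and> y < z \<and> gcd x (gcd y z) = 1 \<and> odd z}"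

definition S2 :: "int \<Rightarrow> (real^2^2) set" where
  "S2 m = {(1 / sqrt 2) *\<^sub>R mat2 (of_int x) (of_int y) 0 (of_int z) | x y z :: int.
             x > 0 \<and> z > 0 \<and> x * z = 2 * m \<and> 0 \<le> y \<and> y < z \<and> gcd x (gcd y z) = 1
             \<and> even x \<and> even z}"

definition M2 :: "int \<Rightarrow> (real^2^2) set" where
  "M2 m = S1 m \<union> S2 m"

definition rcoset_G :: "real^2^2 \<Rightarrow> (real^2^2) set" where
  "rcoset_G g = {h ** g | h. h \<in> Gamma0_2_plus}"

end

theory Submission
  imports Defs
begin

text \<open>Each matrix involved is, after multiplying by w2 on one or both sides, a primitive integer
  matrix B (up to the factor 1/sqrt 2) whose first column (a, c) has c / gcd(a, c) even, i.e.
  a/c is Gamma0(2)-equivalent to the cusp infinity. Completing that reduced column by Bezout to a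
  matrix of Gamma0(2) and reducing the upper right entry modulo the lower right one writes
  B = h [X Y; 0 Z] with h in Gamma0(2), X = gcd(a, c) and 0 \<le> Y < Z. For gamma in S1 or S2
  the entry a is odd, which gives X odd and the triangular factor lies in M1; for gamma in M1
  the parity of z / gcd(y, z) decides whether the factor lands in S1 or S2. Since w2 w2 = -1
  and -1 lies in Gamma0(2), all these relations are identities between cosets.\<close>

lemma mat2_nth:
  "mat2 a b c d $ 1 $ 1 = a" "mat2 a b c d $ 1 $ 2 = b" "mat2 a b c d $ 2 $ 1 = c" "mat2 a b c d $ 2 $ 2 = d"
  by (simp_all add: mat2_def)

lemma mat2_eq_iff: "mat2 a b c d = mat2 a' b' c' d' \<longleftrightarrow> a = a' \<and> b = b' \<and> c = c' \<and> d = d'"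
  by (auto simp add: vec_eq_iff forall_2 mat2_nth)

lemma mat2_mult: "mat2 a b c d ** mat2 e f g h = mat2 (a*e + b*g) (a*f + b*h) (c*e + d*g) (c*f + d*h)"
  by (simp add: vec_eq_iff forall_2 mat2_nth matrix_matrix_mult_def UNIV_2)

lemma mat2_scaleR: "k *\<^sub>R mat2 a b c d = mat2 (k*a) (k*b) (k*c) (k*d)"
  by (simp add: vec_eq_iff forall_2 mat2_nth)

lemma mat2_uminus: "- mat2 a b c d = mat2 (-a) (-b) (-c) (-d)"
  by (simp add: vec_eq_iff forall_2 mat2_nth)

lemma mat_1_eq_mat2: "mat 1 = mat2 1 0 0 1"
  by (simp add: vec_eq_iff forall_2 mat2_nth mat_def)

lemma uminus_matrix_mult: "(- A) ** B = - (A ** (B :: 'a::ring_1^'n^'m))"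
  by (simp add: vec_eq_iff matrix_matrix_mult_def sum_negf)

lemma matrix_mult_uminus: "A ** (- B) = - (A ** (B :: 'a::ring_1^'n^'m))"
  by (simp add: vec_eq_iff matrix_matrix_mult_def sum_negf)

abbreviation imat :: "int \<Rightarrow> int \<Rightarrow> int \<Rightarrow> int \<Rightarrow> real^2^2" where
  "imat a b c d \<equiv> mat2 (of_int a) (of_int b) (of_int c) (of_int d)"

lemma imat_mult: "imat a b c d ** imat e f g h = imat (a*e + b*g) (a*f + b*h) (c*e + d*g) (c*f + d*h)"
  by (simp add: mat2_mult)

lemma w2_w2: "w2 ** w2 = - mat 1"
  by (simp add: w2_def scalar_matrix_assoc[symmetric] matrix_scalar_ac mat2_mult mat2_scaleR
      mat2_uminus mat_1_eq_mat2)

lemma upper_mult_w2: "imat x y 0 z ** w2 = (1 / sqrt 2) *\<^sub>R imat (2*y) (-x) (2*z) 0"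
  by (simp add: w2_def matrix_scalar_ac mat2_mult mat2_scaleR mat2_eq_iff mult.commute)

lemma upper_mult_w2_eq_w2_mult: "imat x y 0 z ** w2 = w2 ** imat z 0 (-2*y) x"
  by (simp add: w2_def matrix_scalar_ac scalar_matrix_assoc[symmetric] mat2_mult mat2_scaleR mat2_eq_iff)

lemma scaled_upper_mult_w2: "((1 / sqrt 2) *\<^sub>R imat (2*x) y 0 z) ** w2 = imat y (-x) z 0"
  by (simp add: w2_def scalar_matrix_assoc[symmetric] matrix_scalar_ac mat2_mult mat2_scaleR mat2_eq_iff)

lemma imat_in_Gamma0_2: "a*d - b*c = 1 \<Longrightarrow> even c \<Longrightarrow> imat a b c d \<in> Gamma0_2"
  unfolding Gamma0_2_def by blast

lemma Gamma0_2_uminus: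
  assumes "h \<in> Gamma0_2"
  shows "- h \<in> Gamma0_2"
proof -
  obtain a b c d where "h = imat a b c d" "a * d - b * c = 1" "even c"
    using assms unfolding Gamma0_2_def by blast
  then show ?thesis
    using imat_in_Gamma0_2[of "-a" "-d" "-b" "-c"] by (simp add: mat2_uminus)
qed

lemma rcoset_GI: "h \<in> Gamma0_2_plus \<Longrightarrow> h ** g \<in> rcoset_G g"
  unfolding rcoset_G_def by blast

lemma rcoset_G_subset: "\<gamma> \<in> rcoset_G \<delta> \<Longrightarrow> rcoset_G \<gamma> \<subseteq> rcoset_G \<delta>"
  unfolding rcoset_G_def by (auto simp: matrix_mul_assoc intro: Gamma0_2_plus.mult)

lemma imat_in_M1:
  "x > 0 \<Longrightarrow> z > 0 \<Longrightarrow> x * z = n \<Longrightarrow> 0 \<le> y \<Longrightarrow> y < z \<Longrightarrow> gcd x (gcd y z) = 1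
    \<Longrightarrow> odd x \<Longrightarrow> imat x y 0 z \<in> M1 n"
  unfolding M1_def by force

lemma imat_in_S1:
  "x > 0 \<Longrightarrow> z > 0 \<Longrightarrow> x * z = n \<Longrightarrow> 0 \<le> y \<Longrightarrow> y < z \<Longrightarrow> gcd x (gcd y z) = 1
    \<Longrightarrow> odd z \<Longrightarrow> imat x y 0 z \<in> S1 n"
  unfolding S1_def by force

lemma scaled_imat_in_S2:
  "x > 0 \<Longrightarrow> z > 0 \<Longrightarrow> x * z = 2 * n \<Longrightarrow> 0 \<le> y \<Longrightarrow> y < z \<Longrightarrow> gcd x (gcd y z) = 1
    \<Longrightarrow> even x \<Longrightarrow> even z \<Longrightarrow> (1 / sqrt 2) *\<^sub>R imat x y 0 z \<in> S2 n"
  unfolding S2_def by force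

definition int_matrix_primitive :: "int \<Rightarrow> int \<Rightarrow> int \<Rightarrow> int \<Rightarrow> bool" where
  "int_matrix_primitive a b c d \<longleftrightarrow> (\<forall>k. k dvd a \<longrightarrow> k dvd b \<longrightarrow> k dvd c \<longrightarrow> k dvd d \<longrightarrow> is_unit k)"

lemma int_matrix_primitive_if_dvd_doubles:
  fixes a b c d x y z :: int
  assumes gcd: "gcd x (gcd y z) = 1" and odd: "odd a \<or> odd b \<or> odd c \<or> odd d"
    and doubles: "\<And>k. k dvd a \<Longrightarrow> k dvd b \<Longrightarrow> k dvd c \<Longrightarrow> k dvd d
      \<Longrightarrow> k dvd 2 * x \<and> k dvd 2 * y \<and> k dvd 2 * z"
  shows "int_matrix_primitive a b c d"
  unfolding int_matrix_primitive_def
proof (intro allI impI)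
  fix k assume k: "k dvd a" "k dvd b" "k dvd c" "k dvd d"
  have "odd k"
    using odd k dvd_trans[of 2 k] by blast
  then have "coprime k 2"
    by (simp add: coprime_commute)
  then have "k dvd x" "k dvd y" "k dvd z"
    using doubles[OF k] coprime_dvd_mult_right_iff by blast+
  then show "is_unit k"
    using gcd by (metis gcd_greatest)
qed

lemma Gamma0_2_upper_decomposition:
  fixes a b c d g a' c' n :: int
  assumes a: "a = g * a'" and c: "c = g * c'" and "coprime a' c'" and "even c'" and "g > 0"
    and det: "a*d - b*c = n" and "n > 0" and prim: "int_matrix_primitive a b c d"
  obtains h Y Z where "h \<in> Gamma0_2" "imat a b c d = h ** imat g Y 0 Z" "g * Z = n"
    "0 \<le> Y" "Y < Z" "gcd g (gcd Y Z) = 1"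
proof -
  obtain u v where uv: "u * a' + v * c' = 1"
    using bezout_int[of a' c'] \<open>coprime a' c'\<close> by auto
  define Z where "Z = a' * d - c' * b"
  define t where "t = (u * b + v * d) div Z"
  define Y where "Y = (u * b + v * d) mod Z"
  \<comment> \<open>the Bezout completion of (a', c'), followed by the translation by t\<close>
  define Q S where "Q = a' * t - v" and "S = c' * t + u"
  have "g * Z = n"
    using det by (simp add: Z_def a c algebra_simps)
  then have "Z > 0"
    using \<open>g > 0\<close> \<open>n > 0\<close> by (metis zero_less_mult_pos)
  have Y_eq: "Y = u * b + v * d - t * Z"
    by (simp add: Y_def t_def minus_div_mult_eq_mod)
  have "a' * Y + Q * Z = b * (u * a' + v * c')" and "c' * Y + S * Z = d * (u * a' + v * c')"
    by (simp_all add: Y_eq Q_def S_def Z_def algebra_simps)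
  then have b: "b = a' * Y + Q * Z" and d: "d = c' * Y + S * Z"
    using uv by simp_all
  have "imat a' Q c' S \<in> Gamma0_2"
    using uv \<open>even c'\<close> by (intro imat_in_Gamma0_2) (simp_all add: Q_def S_def algebra_simps)
  moreover have "imat a b c d = imat a' Q c' S ** imat g Y 0 Z"
    using imat_mult[of a' Q c' S g Y 0 Z] by (simp add: a c b d mult.commute)
  moreover have "is_unit (gcd g (gcd Y Z))"
    using prim unfolding int_matrix_primitive_def a c b d
    by (meson dvd_add dvd_mult dvd_mult2 gcd_dvd1 gcd_dvd2 dvd_trans)
  then have "gcd g (gcd Y Z) = 1"
    by simp
  ultimately show thesis
    using that \<open>g * Z = n\<close> \<open>Z > 0\<close> by (simp add: Y_def)
qed

lemma odd_column_decomposition: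
  fixes a b c d n :: int
  assumes "odd a" and "even c" and det: "a*d - b*c = n" and "n > 0"
    and prim: "int_matrix_primitive a b c d"
  obtains h \<gamma> where "h \<in> Gamma0_2" "\<gamma> \<in> M1 n" "imat a b c d = h ** \<gamma>"
proof -
  define g where "g = gcd a c"
  have "a \<noteq> 0"
    using \<open>odd a\<close> by auto
  then have "g > 0"
    by (simp add: g_def)
  obtain a' c' where "a = a' * g" "c = c' * g" "coprime a' c'"
    using gcd_coprime_exists[of a c] \<open>g > 0\<close> unfolding g_def by auto
  then have a: "a = g * a'" and c: "c = g * c'"
    by simp_all
  have "odd g"
    using \<open>odd a\<close> a by simp
  then have "even c'"
    using \<open>even c\<close> c by simp
  obtain h Y Z where "h \<in> Gamma0_2" "imat a b c d = h ** imat g Y 0 Z" "g * Z = n"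
    "0 \<le> Y" "Y < Z" "gcd g (gcd Y Z) = 1"
    using Gamma0_2_upper_decomposition[OF a c \<open>coprime a' c'\<close> \<open>even c'\<close> \<open>g > 0\<close> det \<open>n > 0\<close> prim] .
  moreover have "imat g Y 0 Z \<in> M1 n"
    using calculation(3-6) \<open>g > 0\<close> \<open>odd g\<close> by (intro imat_in_M1) auto
  ultimately show thesis
    using that by blast
qed

lemma S1_mult_w2_in_rcoset_M1:
  assumes "\<gamma> \<in> S1 n"
  shows "\<exists>\<gamma>1\<in>M1 n. \<gamma> ** w2 \<in> rcoset_G \<gamma>1"
proof -
  obtain x y z where \<gamma>: "\<gamma> = imat x y 0 z" and "x > 0" "z > 0" "x * z = n"
    and gcd: "gcd x (gcd y z) = 1" and "odd z"
    using assms unfolding S1_def by auto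
  have prim: "int_matrix_primitive z 0 (-2*y) x"
    by (rule int_matrix_primitive_if_dvd_doubles[OF gcd]) (use \<open>odd z\<close> in auto)
  obtain h \<gamma>1 where h: "h \<in> Gamma0_2" and "\<gamma>1 \<in> M1 n" and B: "imat z 0 (-2*y) x = h ** \<gamma>1"
  proof (rule odd_column_decomposition[OF \<open>odd z\<close> _ _ _ prim])
    show "z * x - 0 * (-2*y) = n" "n > 0"
      using \<open>x * z = n\<close> \<open>x > 0\<close> \<open>z > 0\<close> by (auto simp: mult.commute)
  qed auto
  have "\<gamma> ** w2 = (w2 ** h) ** \<gamma>1"
    using B upper_mult_w2_eq_w2_mult[of x y z] by (simp add: \<gamma> matrix_mul_assoc)
  moreover have "w2 ** h \<in> Gamma0_2_plus"
    using h by (intro Gamma0_2_plus.mult Gamma0_2_plus.gen_w Gamma0_2_plus.gen_G)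
  ultimately show ?thesis
    using \<open>\<gamma>1 \<in> M1 n\<close> rcoset_GI by metis
qed

lemma S2_mult_w2_in_rcoset_M1:
  assumes "\<gamma> \<in> S2 n"
  shows "\<exists>\<gamma>1\<in>M1 n. \<gamma> ** w2 \<in> rcoset_G \<gamma>1"
proof -
  obtain x y z where \<gamma>: "\<gamma> = (1 / sqrt 2) *\<^sub>R imat x y 0 z" and "x > 0" "z > 0" "x * z = 2 * n"
    and gcd: "gcd x (gcd y z) = 1" and "even x" "even z"
    using assms unfolding S2_def by auto
  obtain x' where x: "x = 2 * x'"
    using \<open>even x\<close> by blast
  have "odd y"
  proof
    assume "even y"
    then have "2 dvd gcd x (gcd y z)"
      using \<open>even x\<close> \<open>even z\<close> by (intro gcd_greatest)
    then show False
      using gcd by simp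
  qed
  have prim: "int_matrix_primitive y (-x') z 0"
    by (rule int_matrix_primitive_if_dvd_doubles[OF gcd]) (use \<open>odd y\<close> in \<open>auto simp: x\<close>)
  obtain h \<gamma>1 where h: "h \<in> Gamma0_2" and "\<gamma>1 \<in> M1 n" and B: "imat y (-x') z 0 = h ** \<gamma>1"
  proof (rule odd_column_decomposition[OF \<open>odd y\<close> \<open>even z\<close> _ _ prim])
    show "y * 0 - (-x') * z = n" "n > 0"
      using \<open>x * z = 2 * n\<close> \<open>x > 0\<close> \<open>z > 0\<close> by (auto simp: x zero_less_mult_iff)
  qed auto
  have "\<gamma> ** w2 = h ** \<gamma>1"
    using B scaled_upper_mult_w2[of x' y z] by (simp add: \<gamma> x)
  then show ?thesis
    using \<open>\<gamma>1 \<in> M1 n\<close> h Gamma0_2_plus.gen_G rcoset_GI by metis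
qed

lemma upper_in_rcoset_S1_mult_w2:
  fixes x y z e y' z' :: int
  assumes "x > 0" "z > 0" "odd x" "x * z = n" and gcd: "gcd x (gcd y z) = 1"
    and y: "y = e * y'" and z: "z = e * z'" and "e > 0" "coprime y' z'" "odd z'"
  shows "\<exists>\<gamma>2\<in>S1 n. imat x y 0 z \<in> rcoset_G (\<gamma>2 ** w2)"
proof -
  have a: "z = e * z'" and c: "-2*y = e * (-2*y')"
    by (simp_all add: y z)
  have "coprime z' (-2*y')"
    using \<open>coprime y' z'\<close> \<open>odd z'\<close> by (simp add: coprime_commute)
  have prim: "int_matrix_primitive z 0 (-2*y) x"
    by (rule int_matrix_primitive_if_dvd_doubles[OF gcd]) (use \<open>odd x\<close> in auto)
  have det: "z * x - 0 * (-2*y) = n" and "n > 0"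
    using \<open>x * z = n\<close> \<open>x > 0\<close> \<open>z > 0\<close> by (auto simp: mult.commute)
  obtain h Y Z where h: "h \<in> Gamma0_2" and B: "imat z 0 (-2*y) x = h ** imat e Y 0 Z"
    and "e * Z = n" "0 \<le> Y" "Y < Z" "gcd e (gcd Y Z) = 1"
    using Gamma0_2_upper_decomposition[OF a c \<open>coprime z' (-2*y')\<close> _ \<open>e > 0\<close> det \<open>n > 0\<close> prim]
    by auto
  have "e * Z = e * (x * z')"
    using \<open>e * Z = n\<close> \<open>x * z = n\<close> by (simp add: z algebra_simps)
  then have "Z = x * z'"
    using \<open>e > 0\<close> by simp
  then have "imat e Y 0 Z \<in> S1 n"
    using \<open>e * Z = n\<close> \<open>0 \<le> Y\<close> \<open>Y < Z\<close> \<open>gcd e (gcd Y Z) = 1\<close> \<open>e > 0\<close> \<open>odd x\<close> \<open>odd z'\<close>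
    by (intro imat_in_S1) auto
  moreover have "imat x y 0 z = (w2 ** - h) ** (imat e Y 0 Z ** w2)"
  proof -
    have "imat x y 0 z = - ((imat x y 0 z ** w2) ** w2)"
      by (simp add: matrix_mul_assoc[symmetric] w2_w2 matrix_mult_uminus)
    also have "\<dots> = - (w2 ** (h ** imat e Y 0 Z) ** w2)"
      by (simp only: upper_mult_w2_eq_w2_mult B)
    also have "\<dots> = (w2 ** - h) ** (imat e Y 0 Z ** w2)"
      by (simp add: matrix_mul_assoc uminus_matrix_mult matrix_mult_uminus)
    finally show ?thesis .
  qed
  moreover have "w2 ** - h \<in> Gamma0_2_plus"
    using h by (intro Gamma0_2_plus.mult Gamma0_2_plus.gen_w Gamma0_2_plus.gen_G Gamma0_2_uminus)
  ultimately show ?thesis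
    using rcoset_GI by metis
qed

lemma upper_in_rcoset_S2_mult_w2:
  fixes x y z e y' z' :: int
  assumes "x > 0" "z > 0" "odd x" "x * z = n" and gcd: "gcd x (gcd y z) = 1"
    and y: "y = e * y'" and z: "z = e * z'" and "e > 0" "coprime y' z'" "even z'"
  shows "\<exists>\<gamma>2\<in>S2 n. imat x y 0 z \<in> rcoset_G (\<gamma>2 ** w2)"
proof -
  have a: "2*y = (2*e) * y'" and c: "2*z = (2*e) * z'" and "2*e > 0"
    using \<open>e > 0\<close> by (simp_all add: y z)
  have prim: "int_matrix_primitive (2*y) (-x) (2*z) 0"
    by (rule int_matrix_primitive_if_dvd_doubles[OF gcd]) (use \<open>odd x\<close> in auto)
  have det: "2*y * 0 - (-x) * (2*z) = 2 * n" and "2 * n > 0"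
    using \<open>x * z = n\<close> \<open>x > 0\<close> \<open>z > 0\<close> by auto
  obtain h Y Z where h: "h \<in> Gamma0_2" and B: "imat (2*y) (-x) (2*z) 0 = h ** imat (2*e) Y 0 Z"
    and "2 * e * Z = 2 * n" "0 \<le> Y" "Y < Z" "gcd (2*e) (gcd Y Z) = 1"
    using Gamma0_2_upper_decomposition[OF a c \<open>coprime y' z'\<close> \<open>even z'\<close> \<open>2*e > 0\<close> det \<open>2 * n > 0\<close> prim]
    by auto
  define \<gamma>2 where "\<gamma>2 = (1 / sqrt 2) *\<^sub>R imat (2*e) Y 0 Z"
  have "e * Z = n"
    using \<open>2 * e * Z = 2 * n\<close> by simp
  then have "e * Z = e * (x * z')"
    using \<open>x * z = n\<close> by (simp add: z algebra_simps)
  then have "Z = x * z'"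
    using \<open>e > 0\<close> by simp
  then have "\<gamma>2 \<in> S2 n"
    unfolding \<gamma>2_def using \<open>2 * e * Z = 2 * n\<close> \<open>0 \<le> Y\<close> \<open>Y < Z\<close> \<open>gcd (2*e) (gcd Y Z) = 1\<close> \<open>e > 0\<close> \<open>even z'\<close>
    by (intro scaled_imat_in_S2) auto
  moreover have "imat x y 0 z = (- h) ** (\<gamma>2 ** w2)"
  proof -
    have "imat x y 0 z = - ((imat x y 0 z ** w2) ** w2)"
      by (simp add: matrix_mul_assoc[symmetric] w2_w2 matrix_mult_uminus)
    also have "\<dots> = - ((h ** \<gamma>2) ** w2)"
      by (simp only: upper_mult_w2 B \<gamma>2_def scalar_matrix_assoc matrix_scalar_ac)
    also have "\<dots> = (- h) ** (\<gamma>2 ** w2)"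
      by (simp add: matrix_mul_assoc uminus_matrix_mult)
    finally show ?thesis .
  qed
  moreover have "- h \<in> Gamma0_2_plus"
    using h by (intro Gamma0_2_plus.gen_G Gamma0_2_uminus)
  ultimately show ?thesis
    using rcoset_GI by metis
qed

lemma M1_in_rcoset_M2_mult_w2:
  assumes "\<gamma> \<in> M1 n"
  shows "\<exists>\<gamma>2\<in>M2 n. \<gamma> \<in> rcoset_G (\<gamma>2 ** w2)"
proof -
  obtain x y z where \<gamma>: "\<gamma> = imat x y 0 z" and "x > 0" "z > 0" "x * z = n"
    and gcd: "gcd x (gcd y z) = 1" and "odd x"
    using assms unfolding M1_def by auto
  define e where "e = gcd y z"
  have "e > 0"
    using \<open>z > 0\<close> by (simp add: e_def)
  obtain y' z' where "y = y' * e" "z = z' * e" "coprime y' z'"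
    using gcd_coprime_exists[of y z] \<open>e > 0\<close> unfolding e_def by auto
  then have y: "y = e * y'" and z: "z = e * z'"
    by simp_all
  note upper = \<open>x > 0\<close> \<open>z > 0\<close> \<open>odd x\<close> \<open>x * z = n\<close> gcd y z \<open>e > 0\<close> \<open>coprime y' z'\<close>
  show ?thesis
  proof (cases "even z'")
    case True
    then show ?thesis
      using upper_in_rcoset_S2_mult_w2[OF upper] by (auto simp: \<gamma> M2_def)
  next
    case False
    then show ?thesis
      using upper_in_rcoset_S1_mult_w2[OF upper] by (auto simp: \<gamma> M2_def)
  qed
qed

theorem lemma2p7:
  fixes m :: int
  assumes "m > 0" and "even m"
  shows "(\<Union>\<gamma>\<in>M1 m. rcoset_G \<gamma>) = (\<Union>\<gamma>\<in>M2 m. rcoset_G (\<gamma> ** w2))"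
proof (intro equalityI UN_least)
  fix \<gamma> assume "\<gamma> \<in> M1 m"
  then obtain \<gamma>2 where "\<gamma>2 \<in> M2 m" "\<gamma> \<in> rcoset_G (\<gamma>2 ** w2)"
    using M1_in_rcoset_M2_mult_w2 by blast
  then show "rcoset_G \<gamma> \<subseteq> (\<Union>\<gamma>\<in>M2 m. rcoset_G (\<gamma> ** w2))"
    using rcoset_G_subset by blast
next
  fix \<gamma> assume "\<gamma> \<in> M2 m"
  then obtain \<gamma>1 where "\<gamma>1 \<in> M1 m" "\<gamma> ** w2 \<in> rcoset_G \<gamma>1"
    using S1_mult_w2_in_rcoset_M1 S2_mult_w2_in_rcoset_M1 unfolding M2_def by blast
  then show "rcoset_G (\<gamma> ** w2) \<subseteq> (\<Union>\<gamma>\<in>M1 m. rcoset_G \<gamma>)"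
    using rcoset_G_subset by blast
qed

end
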